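(* Let $m\in\mathbb{N}$, $m\geq 2$, let $G$ be an abelian (locally compact) group, let $(X,G)$ and $(X',G)$ be minimal continuous actions, and let $\pi\colon X\to X'$ be a factor map. If $\pi$ is an $m$-MEF map, then $(X',G)$ is $m$-equicontinuous.
   Context: Actions are continuous actions on compact metric spaces; a factor map is a continuous equivariant surjection. For a surjection $\varphi\colon X\to Y$, $R_\varphi$ is the equivalence relation $x\sim y\iff\varphi(x)=\varphi(y)$ and $X/\varphi$ denotes the set of its equivalence classes. $\pi_{eq}\colon X\to X_{eq}$ is the factor map onto the maximal equicontinuous factor of $(X,G)$ (the equicontinuous factor of which every equicontinuous factor is a factor). A factor map $\pi\colon X\to X'$ is an $m$-MEF map if every class $A\in X/\pi_{eq}$ is a union $A=\bigcup_{i=1}^{m-1}B_i$ of $m-1$ (not necessarily distinct) classes $B_i\in X/\pi$. $(X',G)$ is $m$-equicontinuous if for every $x\in X'$ and $\varepsilon>0$ there is $\delta>0$ such that for any $x_1,\dots,x_m$ in the open ball $B_\delta(x)$ and every $g\in G$ there exist $i\neq j$ with $d(gx_i,gx_j)<\varepsilon$. *)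

theory Defs
  imports "HOL-Analysis.Analysis"
begin

definition cont_action :: "'a::metric_space set \<Rightarrow> ('g::topological_ab_group_add \<Rightarrow> 'a \<Rightarrow> 'a) \<Rightarrow> bool" where
  "cont_action X act \<longleftrightarrow> compact X \<and>
     (\<forall>g. \<forall>x\<in>X. act g x \<in> X) \<and>
     (\<forall>x\<in>X. act 0 x = x) \<and>
     (\<forall>g h. \<forall>x\<in>X. act (g + h) x = act g (act h x)) \<and>
     continuous_on (UNIV \<times> X) (\<lambda>(g, x). act g x)"

definition minimal_action :: "'a::metric_space set \<Rightarrow> ('g::topological_ab_group_add \<Rightarrow> 'a \<Rightarrow> 'a) \<Rightarrow> bool" where
  "minimal_action X act \<longleftrightarrow> X \<noteq> {} \<and>
     (\<forall>Y. Y \<subseteq> X \<and> Y \<noteq> {} \<and> closed Y \<and> (\<forall>g. \<forall>y\<in>Y. act g y \<in> Y) \<longrightarrow> Y = X)"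

definition factor_map :: "'a::metric_space set \<Rightarrow> ('g \<Rightarrow> 'a \<Rightarrow> 'a) \<Rightarrow>
    'b::metric_space set \<Rightarrow> ('g \<Rightarrow> 'b \<Rightarrow> 'b) \<Rightarrow> ('a \<Rightarrow> 'b) \<Rightarrow> bool" where
  "factor_map X act Y actY p \<longleftrightarrow> continuous_on X p \<and> p ` X = Y \<and>
     (\<forall>g. \<forall>x\<in>X. p (act g x) = actY g (p x))"

definition equicontinuous_action :: "'a::metric_space set \<Rightarrow> ('g \<Rightarrow> 'a \<Rightarrow> 'a) \<Rightarrow> bool" where
  "equicontinuous_action X act \<longleftrightarrow>
     (\<forall>x\<in>X. \<forall>e>0. \<exists>d>0. \<forall>y\<in>X. dist x y < d \<longrightarrow> (\<forall>g. dist (act g x) (act g y) < e))"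

text \<open>Every compact metric space is homeomorphic to a
  compact subset of the Hilbert-cube type nat \<Rightarrow> real (product topology), so quantifying
  over equicontinuous factors living in that type covers all equicontinuous factors
  up to isomorphism.\<close>
definition max_equicontinuous_factor ::
  "'a::metric_space set \<Rightarrow> ('g::topological_ab_group_add \<Rightarrow> 'a \<Rightarrow> 'a) \<Rightarrow>
   'e::metric_space set \<Rightarrow> ('g \<Rightarrow> 'e \<Rightarrow> 'e) \<Rightarrow> ('a \<Rightarrow> 'e) \<Rightarrow> bool" where
  "max_equicontinuous_factor X act E actE peq \<longleftrightarrow>
     cont_action E actE \<and> factor_map X act E actE peq \<and> equicontinuous_action E actE \<and>
     (\<forall>(Z :: (nat \<Rightarrow> real) set) actZ q.
        cont_action Z actZ \<and> factor_map X act Z actZ q \<and> equicontinuous_action Z actZ \<longrightarrow>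
        (\<exists>\<psi>. factor_map E actE Z actZ \<psi> \<and> (\<forall>x\<in>X. q x = \<psi> (peq x))))"

definition kernel_rel :: "'a set \<Rightarrow> ('a \<Rightarrow> 'b) \<Rightarrow> ('a \<times> 'a) set" where
  "kernel_rel X \<phi> = {(x, y). x \<in> X \<and> y \<in> X \<and> \<phi> x = \<phi> y}"

definition mMEF_map :: "nat \<Rightarrow> 'a set \<Rightarrow> ('a \<Rightarrow> 'e) \<Rightarrow> ('a \<Rightarrow> 'b) \<Rightarrow> bool" where
  "mMEF_map m X peq \<pi> \<longleftrightarrow>
     (\<forall>A \<in> X // kernel_rel X peq. \<exists>B. (\<forall>i < m - 1. B i \<in> X // kernel_rel X \<pi>) \<and>
        A = (\<Union>i < m - 1. B i))"

definition m_equicontinuous :: "nat \<Rightarrow> 'a::metric_space set \<Rightarrow> ('g \<Rightarrow> 'a \<Rightarrow> 'a) \<Rightarrow> bool" where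
  "m_equicontinuous m X act \<longleftrightarrow>
     (\<forall>x\<in>X. \<forall>e>0. \<exists>d>0. \<forall>xs :: nat \<Rightarrow> 'a.
        (\<forall>i<m. xs i \<in> X \<and> xs i \<in> ball x d) \<longrightarrow>
        (\<forall>g. \<exists>i<m. \<exists>j<m. i \<noteq> j \<and> dist (act g (xs i)) (act g (xs j)) < e))"

end

theory Submission
  imports Defs
begin

text \<open>Since \<pi> is m-MEF, the maximal equicontinuous factor map peq is constant on the fibres
  of \<pi>, so it factors as \<psi> \<circ> \<pi> with \<psi> : X' \<rightarrow> E a factor map (continuous because X is
  compact), and every fibre of \<psi> has at most m - 1 points.  By compactness there is a
  uniform \<delta> such that points whose \<psi>-image is \<delta>-close to some z \<in> E are \<epsilon>/2-close to
  one of the at most m - 1 points above z.  Equicontinuity of E together with continuity of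
  \<psi> keeps the \<psi>-images of all translates g y of points y near x within \<delta> of g(\<psi> x), so by
  the pigeonhole principle two of any m such translates are \<epsilon>/2-close to the same point.\<close>

lemma compact_Int_vimage_closed:
  fixes f :: "'a::t2_space \<Rightarrow> 'b::topological_space"
  assumes "compact S" "continuous_on S f" "closed B"
  shows "compact (S \<inter> f -` B)"
proof -
  have closed: "closed (S \<inter> f -` B)"
    using continuous_closed_preimage[OF assms(2) compact_imp_closed[OF assms(1)] assms(3)] .
  show ?thesis
    using compact_Int_closed[OF assms(1) closed] by (simp only: Int_left_absorb)
qed

lemma continuous_on_factor_through_compact:
  fixes p :: "'a::t2_space \<Rightarrow> 'b::t2_space" and f :: "'a \<Rightarrow> 'c::topological_space"
  assumes "compact S" "continuous_on S p" "continuous_on S f" "\<And>x. x \<in> S \<Longrightarrow> g (p x) = f x"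
  shows "continuous_on (p ` S) g"
  unfolding continuous_on_closed_invariant
proof (intro allI impI)
  fix B :: "'c set" assume "closed B"
  let ?A = "p ` (S \<inter> f -` B)"
  have "compact (S \<inter> f -` B)"
    using assms(1,3) \<open>closed B\<close> by (rule compact_Int_vimage_closed)
  then have "compact ?A"
    using continuous_on_subset[OF assms(2) Int_lower1] by (rule compact_continuous_image[rotated])
  moreover have "?A \<inter> p ` S = g -` B \<inter> p ` S"
  proof (intro equalityI subsetI)
    fix y assume "y \<in> ?A \<inter> p ` S"
    then obtain x where "x \<in> S" "f x \<in> B" "y = p x" by blast
    then show "y \<in> g -` B \<inter> p ` S" using assms(4) by simp
  next
    fix y assume "y \<in> g -` B \<inter> p ` S"
    then obtain x where "x \<in> S" "g (p x) \<in> B" "y = p x" by blast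
    then show "y \<in> ?A \<inter> p ` S" using assms(4) by simp
  qed
  ultimately show "\<exists>A. closed A \<and> A \<inter> p ` S = g -` B \<inter> p ` S"
    using compact_imp_closed[OF \<open>compact ?A\<close>] by blast
qed

lemma compact_fibre_neighbourhood:
  assumes "compact S" "continuous_on S f" "open U" "\<And>y. y \<in> S \<Longrightarrow> f y = z \<Longrightarrow> y \<in> U"
  obtains r where "r > 0" "\<And>y. y \<in> S \<Longrightarrow> dist z (f y) < r \<Longrightarrow> y \<in> U"
proof -
  have "compact (S - U)"
    using assms(1,3) by (rule compact_diff)
  then have "open (- f ` (S - U))"
    using continuous_on_subset[OF assms(2) Diff_subset]
    by (intro open_Compl compact_imp_closed compact_continuous_image)
  moreover have "z \<in> - f ` (S - U)"
    using assms(4) by auto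
  ultimately obtain r where "r > 0" and r: "ball z r \<subseteq> - f ` (S - U)"
    by (rule openE)
  show thesis
  proof (rule that[OF \<open>r > 0\<close>])
    fix y assume "y \<in> S" "dist z (f y) < r"
    then show "y \<in> U" using r by auto
  qed
qed

definition fibres_card_le :: "nat \<Rightarrow> 'a set \<Rightarrow> ('a \<Rightarrow> 'b) \<Rightarrow> bool" where
  "fibres_card_le n S f \<longleftrightarrow> (\<forall>z. \<exists>c. \<forall>y\<in>S. f y = z \<longrightarrow> (\<exists>k<n. y = c k))"

lemma uniform_fibre_cover:
  fixes f :: "'a::metric_space \<Rightarrow> 'b::metric_space"
  assumes "compact S" "continuous_on S f" "compact T" "e > 0" "fibres_card_le n S f"
  obtains \<delta> where "\<delta> > 0"
    "\<And>z. z \<in> T \<Longrightarrow> \<exists>c. \<forall>y\<in>S. dist z (f y) < \<delta> \<longrightarrow> (\<exists>k<n. dist (c k) y < e)"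
proof -
  have "\<exists>r>0. \<exists>c. \<forall>y\<in>S. dist z (f y) < r \<longrightarrow> (\<exists>k<n. dist (c k) y < e)" if "z \<in> T" for z
  proof -
    obtain c where c: "\<forall>y\<in>S. f y = z \<longrightarrow> (\<exists>k<n. y = c k)"
      using assms(5) unfolding fibres_card_le_def by blast
    obtain r where "r > 0" "\<And>y. y \<in> S \<Longrightarrow> dist z (f y) < r \<Longrightarrow> y \<in> (\<Union>k<n. ball (c k) e)"
    proof (rule compact_fibre_neighbourhood[OF assms(1,2)])
      fix y assume "y \<in> S" "f y = z"
      then obtain k where "k < n" "y = c k" using c by blast
      then show "y \<in> (\<Union>k<n. ball (c k) e)" using \<open>e > 0\<close> by force
    qed auto
    then show ?thesis by (intro exI[of _ r] conjI exI[of _ c]) auto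
  qed
  then obtain R c where R: "\<And>z. z \<in> T \<Longrightarrow> R z > 0"
    and Rc: "\<And>z y. z \<in> T \<Longrightarrow> y \<in> S \<Longrightarrow> dist z (f y) < R z \<Longrightarrow> \<exists>k<n. dist (c z k) y < e"
    by metis
  \<comment> \<open>\<delta> is a Lebesgue number of the cover of T by the balls of radius R w\<close>
  obtain \<delta> where "\<delta> > 0" and \<delta>: "\<And>z. z \<in> T \<Longrightarrow> \<exists>B \<in> (\<lambda>w. ball w (R w)) ` T. ball z \<delta> \<subseteq> B"
  proof (rule Heine_Borel_lemma[OF assms(3)])
    show "T \<subseteq> \<Union> ((\<lambda>w. ball w (R w)) ` T)" using R by auto
  qed auto
  show thesis
  proof (rule that[OF \<open>\<delta> > 0\<close>])
    fix z assume "z \<in> T"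
    then obtain w where "w \<in> T" and w: "ball z \<delta> \<subseteq> ball w (R w)" using \<delta> by blast
    have "\<exists>k<n. dist (c w k) y < e" if "y \<in> S" "dist z (f y) < \<delta>" for y
      using Rc[OF \<open>w \<in> T\<close> \<open>y \<in> S\<close>] w that by (auto simp: dist_commute)
    then show "\<exists>c. \<forall>y\<in>S. dist z (f y) < \<delta> \<longrightarrow> (\<exists>k<n. dist (c k) y < e)"
      by blast
  qed
qed

lemma pigeonhole_common_index:
  fixes n m :: nat
  assumes "n < m" "\<And>i. i < m \<Longrightarrow> \<exists>k<n. P i k"
  obtains i j k where "i < m" "j < m" "i \<noteq> j" "P i k" "P j k"
proof -
  obtain f where f: "\<And>i. i < m \<Longrightarrow> f i < n \<and> P i (f i)"
    using assms(2) by metis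
  have "card (f ` {..<m}) \<le> n"
    using f by (metis card_lessThan card_mono finite_lessThan image_subset_iff lessThan_iff)
  then have "\<not> inj_on f {..<m}"
    using assms(1) by (metis card_lessThan le_less_trans pigeonhole)
  then obtain i j where "i < m" "j < m" "i \<noteq> j" "f i = f j"
    unfolding inj_on_def by blast
  then show thesis
    using that f by metis
qed

lemma factor_map_through:
  assumes "cont_action X act" "factor_map X act Y actY p" "factor_map X act Z actZ f"
    and "\<And>x y. x \<in> X \<Longrightarrow> y \<in> X \<Longrightarrow> p x = p y \<Longrightarrow> f x = f y"
  obtains g where "factor_map Y actY Z actZ g" "\<And>x. x \<in> X \<Longrightarrow> g (p x) = f x"
proof -
  define g where "g y = f (SOME x. x \<in> X \<and> p x = y)" for y
  have pX: "p ` X = Y" and fX: "f ` X = Z"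
    using assms(2,3) by (simp_all add: factor_map_def)
  have gp: "g (p x) = f x" if "x \<in> X" for x
  proof -
    have "\<exists>x'. x' \<in> X \<and> p x' = p x" using that by blast
    then show ?thesis
      unfolding g_def using assms(4) that by (metis (mono_tags, lifting) someI_ex)
  qed
  have "compact X" "continuous_on X p" "continuous_on X f"
    using assms(1-3) by (simp_all add: cont_action_def factor_map_def)
  then have "continuous_on Y g"
    using continuous_on_factor_through_compact gp unfolding pX[symmetric] by blast
  moreover have "g ` Y = Z"
    unfolding pX[symmetric] fX[symmetric] image_image by (rule image_cong) (simp_all add: gp)
  moreover have "g (actY h y) = actZ h (g y)" if "y \<in> Y" for h y
  proof -
    obtain x where x: "x \<in> X" "y = p x" using \<open>y \<in> Y\<close> pX by blast
    then have "act h x \<in> X" using assms(1) by (simp add: cont_action_def)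
    have "g (actY h y) = g (p (act h x))"
      using assms(2) x by (simp add: factor_map_def)
    also have "\<dots> = f (act h x)" using gp \<open>act h x \<in> X\<close> .
    also have "\<dots> = actZ h (g y)"
      using assms(3) x gp by (simp add: factor_map_def)
    finally show ?thesis .
  qed
  ultimately have "factor_map Y actY Z actZ g"
    by (simp add: factor_map_def)
  then show thesis using gp by (rule that)
qed

lemma factor_map_equicontinuous_orbit_close:
  assumes "cont_action Y actY" "factor_map Y actY E actE \<psi>" "equicontinuous_action E actE"
    and "x \<in> Y" "\<delta> > 0"
  obtains d where "d > 0"
    "\<And>y g. y \<in> Y \<Longrightarrow> dist y x < d \<Longrightarrow> dist (actE g (\<psi> x)) (\<psi> (actY g y)) < \<delta>"
proof -
  have cont: "continuous_on Y \<psi>" and "\<psi> ` Y = E"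
    and \<psi>_act: "\<And>g y. y \<in> Y \<Longrightarrow> \<psi> (actY g y) = actE g (\<psi> y)"
    using assms(2) by (auto simp: factor_map_def)
  then have "\<psi> x \<in> E" using \<open>x \<in> Y\<close> by blast
  then obtain d1 where "d1 > 0"
    and d1: "\<forall>z\<in>E. dist (\<psi> x) z < d1 \<longrightarrow> (\<forall>g. dist (actE g (\<psi> x)) (actE g z) < \<delta>)"
    using assms(3,5) unfolding equicontinuous_action_def by blast
  obtain d where "d > 0" and d: "\<forall>y\<in>Y. dist y x < d \<longrightarrow> dist (\<psi> y) (\<psi> x) < d1"
    using cont \<open>x \<in> Y\<close> \<open>d1 > 0\<close> unfolding continuous_on_iff by blast
  show thesis
  proof (rule that[OF \<open>d > 0\<close>])
    fix y g assume "y \<in> Y" "dist y x < d"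
    then have "dist (\<psi> x) (\<psi> y) < d1" and "\<psi> y \<in> E"
      using d \<open>\<psi> ` Y = E\<close> by (auto simp: dist_commute)
    then show "dist (actE g (\<psi> x)) (\<psi> (actY g y)) < \<delta>"
      using d1 \<psi>_act[OF \<open>y \<in> Y\<close>] by simp
  qed
qed

lemma m_equicontinuous_finite_to_one_extension:
  assumes "cont_action Y actY" "cont_action E actE" "equicontinuous_action E actE"
    and "factor_map Y actY E actE \<psi>" "fibres_card_le (m - 1) Y \<psi>"
  shows "m_equicontinuous m Y actY"
  unfolding m_equicontinuous_def
proof (intro ballI allI impI)
  fix x and e :: real assume "x \<in> Y" "e > 0"
  have "compact Y" "compact E" "continuous_on Y \<psi>" "\<psi> ` Y = E"
    and Y_act: "\<And>g y. y \<in> Y \<Longrightarrow> actY g y \<in> Y" and E_act: "\<And>g z. z \<in> E \<Longrightarrow> actE g z \<in> E"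
    using assms(1,2,4) by (auto simp: cont_action_def factor_map_def)
  then have "\<psi> x \<in> E" using \<open>x \<in> Y\<close> by blast
  obtain c where "\<forall>y\<in>Y. \<psi> y = \<psi> x \<longrightarrow> (\<exists>k<m-1. y = c k)"
    using assms(5) unfolding fibres_card_le_def by blast
  then obtain k where "k < m - 1"
    using \<open>x \<in> Y\<close> by blast
  then have "m - 1 < m"
    by linarith
  obtain \<delta> where "\<delta> > 0" and \<delta>:
    "\<And>z. z \<in> E \<Longrightarrow> \<exists>c. \<forall>y\<in>Y. dist z (\<psi> y) < \<delta> \<longrightarrow> (\<exists>k<m-1. dist (c k) y < e/2)"
    using uniform_fibre_cover[OF \<open>compact Y\<close> \<open>continuous_on Y \<psi>\<close> \<open>compact E\<close> half_gt_zero[OF \<open>e > 0\<close>] assms(5)]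
    by blast
  obtain d where "d > 0"
    and d: "\<And>y g. y \<in> Y \<Longrightarrow> dist y x < d \<Longrightarrow> dist (actE g (\<psi> x)) (\<psi> (actY g y)) < \<delta>"
    using factor_map_equicontinuous_orbit_close[OF assms(1,4,3) \<open>x \<in> Y\<close> \<open>\<delta> > 0\<close>] by blast
  show "\<exists>d>0. \<forall>xs. (\<forall>i<m. xs i \<in> Y \<and> xs i \<in> ball x d) \<longrightarrow>
          (\<forall>g. \<exists>i<m. \<exists>j<m. i \<noteq> j \<and> dist (actY g (xs i)) (actY g (xs j)) < e)"
  proof (intro exI[of _ d] conjI \<open>d > 0\<close> allI impI)
    fix xs g assume xs: "\<forall>i<m. xs i \<in> Y \<and> xs i \<in> ball x d"
    obtain c where c: "\<forall>y\<in>Y. dist (actE g (\<psi> x)) (\<psi> y) < \<delta> \<longrightarrow> (\<exists>k<m-1. dist (c k) y < e/2)"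
      using \<delta> E_act[OF \<open>\<psi> x \<in> E\<close>] by blast
    have near: "\<exists>k<m-1. dist (c k) (actY g (xs i)) < e/2" if "i < m" for i
    proof -
      have "xs i \<in> Y" "dist (xs i) x < d"
        using xs that by (auto simp: dist_commute)
      then show ?thesis
        using c d[of "xs i" g] Y_act[of "xs i" g] by blast
    qed
    obtain i j k where "i < m" "j < m" "i \<noteq> j"
      "dist (c k) (actY g (xs i)) < e/2" "dist (c k) (actY g (xs j)) < e/2"
      by (rule pigeonhole_common_index[of "m - 1" m "\<lambda>i k. dist (c k) (actY g (xs i)) < e/2",
            OF \<open>m - 1 < m\<close> near])
    then show "\<exists>i<m. \<exists>j<m. i \<noteq> j \<and> dist (actY g (xs i)) (actY g (xs j)) < e"
      using dist_triangle_half_r[of "c k" "actY g (xs i)" e "actY g (xs j)"] by blast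
  qed
qed

lemma mMEF_map_class_eq_Union:
  assumes "mMEF_map m X peq \<pi>" "a \<in> X"
  shows "\<exists>c. (\<forall>i<m-1. c i \<in> X) \<and>
    kernel_rel X peq `` {a} = (\<Union>i<m-1. kernel_rel X \<pi> `` {c i})"
proof -
  have "kernel_rel X peq `` {a} \<in> X // kernel_rel X peq"
    using assms(2) by (rule quotientI)
  then obtain B where B: "\<And>i. i < m - 1 \<Longrightarrow> B i \<in> X // kernel_rel X \<pi>"
    and eq: "kernel_rel X peq `` {a} = (\<Union>i<m-1. B i)"
    using assms(1) unfolding mMEF_map_def by blast
  have "\<exists>c. c \<in> X \<and> B i = kernel_rel X \<pi> `` {c}" if "i < m - 1" for i
    using B[OF that] by (rule quotientE) blast
  then obtain c where c: "\<And>i. i < m - 1 \<Longrightarrow> c i \<in> X \<and> B i = kernel_rel X \<pi> `` {c i}"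
    by metis
  have "kernel_rel X peq `` {a} = (\<Union>i<m-1. kernel_rel X \<pi> `` {c i})"
    unfolding eq by (intro SUP_cong refl) (simp add: c)
  then show ?thesis
    using c by blast
qed

lemma mMEF_map_peq_eq:
  assumes "mMEF_map m X peq \<pi>" "a \<in> X" "b \<in> X" "\<pi> a = \<pi> b"
  shows "peq a = peq b"
proof -
  obtain c where c: "\<forall>i<m-1. c i \<in> X"
    and eq: "kernel_rel X peq `` {a} = (\<Union>i<m-1. kernel_rel X \<pi> `` {c i})"
    using mMEF_map_class_eq_Union[OF assms(1,2)] by blast
  have "a \<in> kernel_rel X peq `` {a}"
    using assms(2) by (simp add: kernel_rel_def)
  then obtain k where "k < m - 1" "a \<in> kernel_rel X \<pi> `` {c k}"
    unfolding eq by blast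
  then have "b \<in> kernel_rel X \<pi> `` {c k}"
    using c assms(3,4) by (simp add: kernel_rel_def)
  then have "b \<in> kernel_rel X peq `` {a}"
    unfolding eq using \<open>k < m - 1\<close> by blast
  then show ?thesis
    by (simp add: kernel_rel_def)
qed

lemma mMEF_map_fibres_card_le:
  assumes "mMEF_map m X peq \<pi>" "\<And>a. a \<in> X \<Longrightarrow> \<psi> (\<pi> a) = peq a"
  shows "fibres_card_le (m - 1) (\<pi> ` X) \<psi>"
  unfolding fibres_card_le_def
proof
  fix z
  show "\<exists>c. \<forall>y\<in>\<pi> ` X. \<psi> y = z \<longrightarrow> (\<exists>k<m-1. y = c k)"
  proof (cases "\<exists>a\<in>X. peq a = z")
    case True
    then obtain a where "a \<in> X" "peq a = z" by blast
    then obtain c where eq: "kernel_rel X peq `` {a} = (\<Union>i<m-1. kernel_rel X \<pi> `` {c i})"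
      using mMEF_map_class_eq_Union[OF assms(1)] by blast
    have "\<exists>k<m-1. \<pi> b = \<pi> (c k)" if "b \<in> X" "\<psi> (\<pi> b) = z" for b
    proof -
      have "b \<in> kernel_rel X peq `` {a}"
        using that assms(2) \<open>a \<in> X\<close> \<open>peq a = z\<close> by (simp add: kernel_rel_def)
      then obtain k where "k < m - 1" "b \<in> kernel_rel X \<pi> `` {c k}"
        unfolding eq by blast
      then show ?thesis
        by (auto simp: kernel_rel_def)
    qed
    then show ?thesis
      by (intro exI[of _ "\<lambda>k. \<pi> (c k)"]) blast
  next
    case False
    then have "\<forall>y\<in>\<pi> ` X. \<psi> y \<noteq> z"
      using assms(2) by auto
    then show ?thesis
      by blast
  qed
qed

theorem lemma4p14:
  fixes m :: nat
    and X :: "'a::metric_space set" and act :: "'g::topological_ab_group_add \<Rightarrow> 'a \<Rightarrow> 'a"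
    and X' :: "'b::metric_space set" and act' :: "'g \<Rightarrow> 'b \<Rightarrow> 'b"
    and E :: "'e::metric_space set" and actE :: "'g \<Rightarrow> 'e \<Rightarrow> 'e"
    and \<pi> :: "'a \<Rightarrow> 'b" and peq :: "'a \<Rightarrow> 'e"
  assumes "m \<ge> 2"
    and "locally_compact_space (euclidean :: 'g topology)"
    and "cont_action X act" and "minimal_action X act"
    and "cont_action X' act'" and "minimal_action X' act'"
    and "factor_map X act X' act' \<pi>"
    and "max_equicontinuous_factor X act E actE peq"
    and "mMEF_map m X peq \<pi>"
  shows "m_equicontinuous m X' act'"
proof -
  have E: "cont_action E actE" "factor_map X act E actE peq" "equicontinuous_action E actE"
    using assms(8) by (simp_all add: max_equicontinuous_factor_def)
  obtain \<psi> where \<psi>: "factor_map X' act' E actE \<psi>" and \<psi>_\<pi>: "\<And>a. a \<in> X \<Longrightarrow> \<psi> (\<pi> a) = peq a"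
    using factor_map_through[OF assms(3,7) E(2) mMEF_map_peq_eq[OF assms(9)]] by blast
  have "\<pi> ` X = X'"
    using assms(7) by (simp add: factor_map_def)
  then have "fibres_card_le (m - 1) X' \<psi>"
    using mMEF_map_fibres_card_le[OF assms(9) \<psi>_\<pi>] by simp
  then show ?thesis
    using m_equicontinuous_finite_to_one_extension[OF assms(5) E(1,3) \<psi>] by blast
qed

end
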